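(* For all integers $m\ge1$, $r\ge0$ and $n\ge0$, $$\mathcal B_n(x)=\sum_{k=0}^n\sum_{l=k}^n\binom nl\,\mathcal B_{n-l}\,w_{m,r}(l,k)\,\mathcal D_{m,r}(k,x).$$
   Context: The Bernoulli polynomials are defined by $\sum_{n\ge0}\mathcal B_n(x)\frac{t^n}{n!}=\frac{te^{xt}}{e^t-1}$ and $\mathcal B_n:=\mathcal B_n(0)$. For integers $m\ge1$, $n,k,r\ge0$: the $r$-Whitney numbers of the first kind $w_{m,r}(n,k)$ are defined by $\sum_{n\ge k}w_{m,r}(n,k)\frac{z^n}{n!}=(1+mz)^{-r/m}\frac{\ln^k(1+mz)}{m^kk!}$; the $r$-Whitney numbers of the second kind $W_{m,r}(n,k)$ by $\sum_{n\ge k}W_{m,r}(n,k)\frac{z^n}{n!}=\frac{e^{rz}}{k!}\left(\frac{e^{mz}-1}{m}\right)^k$; and the $r$-Dowling polynomial is $\mathcal D_{m,r}(n,u):=\sum_{k=0}^nW_{m,r}(n,k)u^k$. *)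

theory Defs
  imports "HOL-Computational_Algebra.Formal_Power_Series"
begin

definition bernoulli_poly :: "nat \<Rightarrow> real \<Rightarrow> real" where
  "bernoulli_poly n x = fact n * fps_nth (fps_X * fps_exp x / (fps_exp 1 - 1)) n"

definition bernoulli_num :: "nat \<Rightarrow> real" where
  "bernoulli_num n = bernoulli_poly n 0"

text \<open>r-Whitney numbers of the first kind:
  sum_n w(n,k) z^n/n! = (1+mz)^{-r/m} ln^k(1+mz) / (m^k k!).\<close>
definition whitney1 :: "nat \<Rightarrow> nat \<Rightarrow> nat \<Rightarrow> nat \<Rightarrow> real" where
  "whitney1 m r n k = fact n * fps_nth
     ((fps_binomial (- (real r / real m)) oo (fps_const (real m) * fps_X))
       * (fps_ln 1 oo (fps_const (real m) * fps_X)) ^ k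
       / fps_const (real m ^ k * fact k)) n"

definition whitney2 :: "nat \<Rightarrow> nat \<Rightarrow> nat \<Rightarrow> nat \<Rightarrow> real" where
  "whitney2 m r n k = fact n * fps_nth
     (fps_exp (real r) * ((fps_exp (real m) - 1) / fps_const (real m)) ^ k
       / fps_const (fact k)) n"

definition dowling :: "nat \<Rightarrow> nat \<Rightarrow> nat \<Rightarrow> real \<Rightarrow> real" where
  "dowling m r n u = (\<Sum>k=0..n. whitney2 m r n k * u ^ k)"

end

theory Submission
  imports Defs
begin

text \<open>
  With \<open>h(z) = ln(1+mz)/m\<close> and \<open>a(z) = (1+mz)^{-r/m}\<close>, the generating functions say that
  \<open>w(l,k) = l!/k! [z^l] a h^k\<close> and \<open>W(k,j) = k! [z^k] e^{rz} g^j/j!\<close> with \<open>g(z) = (e^{mz}-1)/m\<close>.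
  Since \<open>g\<close> is the compositional inverse of \<open>h\<close> and \<open>a \<cdot> (e^{rz} \<circ> h) = 1\<close>, substituting \<open>h\<close>
  into the second family turns it into \<open>z^j/j!\<close>: the two Whitney matrices are mutually inverse,
  so \<open>\<Sum>\<^sub>k w(l,k) D(k,x) = x^l\<close>. What remains is the Appell expansion
  \<open>B\<^sub>n(x) = \<Sum>\<^sub>l (n choose l) B\<^sub>n\<^sub>-\<^sub>l x^l\<close>.
\<close>

unbundle fps_syntax

lemma bernoulli_poly_binomial_expansion:
  "bernoulli_poly n x = (\<Sum>l=0..n. real (n choose l) * bernoulli_num (n - l) * x ^ l)"
proof -
  define Q :: "real fps" where "Q = fps_X / (fps_exp 1 - 1)"
  have "subdegree (fps_exp (1::real) - 1) = 1"
    by (rule subdegreeI) auto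
  then have gf: "fps_X * fps_exp x / (fps_exp 1 - 1) = Q * fps_exp x"
    unfolding Q_def by (intro fps_divide_times2) simp
  have bernoulli_num_Q: "bernoulli_num i = fact i * Q $ i" for i
    unfolding bernoulli_num_def bernoulli_poly_def Q_def by simp
  have "bernoulli_poly n x = (\<Sum>i=0..n. fact n * (Q $ i * (x ^ (n - i) / fact (n - i))))"
    unfolding bernoulli_poly_def gf fps_mult_nth by (simp add: sum_distrib_left)
  also have "\<dots> = (\<Sum>i=0..n. real (n choose i) * bernoulli_num i * x ^ (n - i))"
  proof (rule sum.cong[OF refl])
    fix i assume "i \<in> {0..n}"
    then have "real (n choose i) = fact n / (fact i * fact (n - i))"
      by (simp add: binomial_fact)
    then show "fact n * (Q $ i * (x ^ (n - i) / fact (n - i))) =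
      real (n choose i) * bernoulli_num i * x ^ (n - i)"
      by (simp add: bernoulli_num_Q field_simps)
  qed
  also have "\<dots> = (\<Sum>l=0..n. real (n choose l) * bernoulli_num (n - l) * x ^ l)"
    by (rule sum.reindex_bij_witness[where i="\<lambda>l. n - l" and j="\<lambda>l. n - l"])
       (auto simp: binomial_symmetric[symmetric])
  finally show ?thesis .
qed

lemma sum_triangle_swap:
  fixes f :: "nat \<Rightarrow> nat \<Rightarrow> 'a::comm_monoid_add"
  shows "(\<Sum>k=0..n. \<Sum>l=k..n. f k l) = (\<Sum>l=0..n. \<Sum>k=0..l. f k l)"
proof (induction n)
  case (Suc n)
  have "(\<Sum>k=0..n. \<Sum>l=k..Suc n. f k l) = (\<Sum>k=0..n. (\<Sum>l=k..n. f k l) + f k (Suc n))"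
    by (rule sum.cong) auto
  then show ?case using Suc by (simp add: sum.distrib)
qed simp

lemma fps_compose_nth_upto:
  fixes F h :: "'a::idom fps"
  assumes "h $ 0 = 0" "n \<le> N"
  shows "(F oo h) $ n = (\<Sum>k=0..N. F $ k * (h ^ k) $ n)"
  unfolding fps_compose_nth
  by (rule sum.mono_neutral_left) (use assms in \<open>auto simp: startsby_zero_power_prefix\<close>)

lemma fps_mult_compose_nth:
  fixes F h a :: "'a::idom fps"
  assumes "h $ 0 = 0"
  shows "(\<Sum>k=0..l. F $ k * (a * h ^ k) $ l) = (a * (F oo h)) $ l"
proof -
  have "(\<Sum>k=0..l. F $ k * (a * h ^ k) $ l)
      = (\<Sum>k=0..l. \<Sum>i=0..l. a $ i * (F $ k * (h ^ k) $ (l - i)))"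
    by (simp add: fps_mult_nth sum_distrib_left algebra_simps)
  also have "\<dots> = (\<Sum>i=0..l. a $ i * (\<Sum>k=0..l. F $ k * (h ^ k) $ (l - i)))"
    by (subst sum.swap) (simp add: sum_distrib_left)
  also have "\<dots> = (\<Sum>i=0..l. a $ i * (F oo h) $ (l - i))"
    using fps_compose_nth_upto[OF assms, of "l - _" l F] by (intro sum.cong) auto
  finally show ?thesis by (simp add: fps_mult_nth)
qed

text \<open>Both sides solve \<open>(1 + z) P' = c P\<close>, \<open>P(0) = 1\<close>.\<close>
lemma fps_exp_compose_ln:
  "fps_exp (c::'a::field_char_0) oo fps_ln 1 = fps_binomial c"
proof -
  let ?P = "fps_exp c oo fps_ln 1"
  have "fps_deriv ?P = fps_const c * ?P / (1 + fps_X)"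
    by (simp add: fps_compose_deriv fps_ln_deriv fps_divide_unit
        flip: fps_const_mult_apply_left)
  then have "?P = fps_const (?P $ 0) * fps_binomial c"
    using fps_binomial_ODE_unique by blast
  then show ?thesis by simp
qed

definition whitney_log :: "nat \<Rightarrow> real fps" where
  "whitney_log m = fps_const (inverse (real m)) * (fps_ln 1 oo (fps_const (real m) * fps_X))"

definition whitney_expm1 :: "nat \<Rightarrow> real fps" where
  "whitney_expm1 m = fps_const (inverse (real m)) * (fps_exp (real m) - 1)"

definition whitney_weight :: "nat \<Rightarrow> nat \<Rightarrow> real fps" where
  "whitney_weight m r = fps_binomial (- (real r / real m)) oo (fps_const (real m) * fps_X)"

lemma whitney_log_nth_0 [simp]: "whitney_log m $ 0 = 0"
  by (simp add: whitney_log_def)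

lemma whitney_expm1_nth_0 [simp]: "whitney_expm1 m $ 0 = 0"
  by (simp add: whitney_expm1_def)

lemma fps_exp_compose_whitney_log:
  "fps_exp c oo whitney_log m = fps_binomial (c / real m) oo (fps_const (real m) * fps_X)"
proof -
  let ?L = "fps_ln 1 oo (fps_const (real m) * fps_X)"
  have "whitney_log m = (fps_const (inverse (real m)) * fps_X) oo ?L"
    unfolding whitney_log_def by (simp flip: fps_const_mult_apply_left)
  then have "fps_exp c oo whitney_log m = (fps_exp c oo (fps_const (inverse (real m)) * fps_X)) oo ?L"
    by (simp add: fps_compose_assoc)
  also have "\<dots> = (fps_exp (c / real m) oo fps_ln 1) oo (fps_const (real m) * fps_X)"
    by (simp add: fps_compose_assoc divide_inverse_commute)
  finally show ?thesis by (simp add: fps_exp_compose_ln)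
qed

lemma whitney_expm1_compose_log:
  assumes "m > 0"
  shows "whitney_expm1 m oo whitney_log m = fps_X"
proof -
  have "whitney_expm1 m oo whitney_log m
      = fps_const (inverse (real m)) * ((fps_exp (real m) oo whitney_log m) - 1)"
    unfolding whitney_expm1_def
    by (simp add: fps_compose_sub_distrib flip: fps_const_mult_apply_left)
  also have "\<dots> = fps_const (inverse (real m)) * (fps_const (real m) * fps_X)"
    using assms by (simp add: fps_exp_compose_whitney_log fps_binomial_1 fps_compose_add_distrib)
  finally show ?thesis using assms by simp
qed

lemma whitney_weight_mult_exp_compose_log:
  "whitney_weight m r * (fps_exp (real r) oo whitney_log m) = 1"
proof -
  have "whitney_weight m r * (fps_exp (real r) oo whitney_log m)
      = (fps_binomial (- (real r / real m)) * fps_binomial (real r / real m))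
          oo (fps_const (real m) * fps_X)"
    unfolding whitney_weight_def fps_exp_compose_whitney_log by (simp add: fps_compose_mult_distrib)
  then show ?thesis by (simp flip: fps_binomial_add_mult)
qed

lemma whitney1_eq_nth:
  assumes "m > 0"
  shows "whitney1 m r l k = fact l / fact k * (whitney_weight m r * whitney_log m ^ k) $ l"
proof -
  have "whitney_log m ^ k
      = fps_const (inverse (real m) ^ k) * (fps_ln 1 oo (fps_const (real m) * fps_X)) ^ k"
    unfolding whitney_log_def by (simp add: power_mult_distrib fps_const_power)
  then show ?thesis
    using assms unfolding whitney1_def whitney_weight_def by (simp add: field_simps)
qed

definition whitney2_egf :: "nat \<Rightarrow> nat \<Rightarrow> nat \<Rightarrow> real fps" where
  "whitney2_egf m r j = fps_const (inverse (fact j)) * (fps_exp (real r) * whitney_expm1 m ^ j)"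

lemma whitney2_eq_nth: "whitney2 m r k j = fact k * whitney2_egf m r j $ k"
  unfolding whitney2_def whitney2_egf_def whitney_expm1_def
  by (simp add: power_mult_distrib fps_const_power del: fps_const_power)

lemma whitney2_eq_0: "k < j \<Longrightarrow> whitney2 m r k j = 0"
  unfolding whitney2_eq_nth whitney2_egf_def
  using startsby_zero_power_prefix[OF whitney_expm1_nth_0[of m], of j] by (simp add: fps_mult_nth)

lemma whitney2_egf_compose_log:
  assumes "m > 0"
  shows "whitney_weight m r * (whitney2_egf m r j oo whitney_log m) = fps_const (inverse (fact j)) * fps_X ^ j"
proof -
  have "whitney2_egf m r j oo whitney_log m
      = fps_const (inverse (fact j)) * ((fps_exp (real r) oo whitney_log m) * fps_X ^ j)"
    using assms unfolding whitney2_egf_def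
    by (simp add: fps_compose_mult_distrib whitney_expm1_compose_log
        flip: fps_compose_power fps_const_mult_apply_left)
  then show ?thesis
    by (metis mult.assoc mult.left_commute mult_1 whitney_weight_mult_exp_compose_log)
qed

lemma whitney1_whitney2_inverse:
  assumes "m > 0"
  shows "(\<Sum>k=0..l. whitney1 m r l k * whitney2 m r k j) = (if l = j then 1 else 0)"
proof -
  have "(\<Sum>k=0..l. whitney1 m r l k * whitney2 m r k j)
      = fact l * (\<Sum>k=0..l. whitney2_egf m r j $ k * (whitney_weight m r * whitney_log m ^ k) $ l)"
    unfolding whitney1_eq_nth[OF assms] whitney2_eq_nth sum_distrib_left
    by (rule sum.cong) auto
  also have "\<dots> = fact l * (whitney_weight m r * (whitney2_egf m r j oo whitney_log m)) $ l"
    by (simp add: fps_mult_compose_nth)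
  finally show ?thesis
    using assms by (simp add: whitney2_egf_compose_log)
qed

lemma sum_whitney1_dowling:
  assumes "m > 0"
  shows "(\<Sum>k=0..l. whitney1 m r l k * dowling m r k x) = x ^ l"
proof -
  have "dowling m r k x = (\<Sum>j=0..l. whitney2 m r k j * x ^ j)" if "k \<le> l" for k
    unfolding dowling_def using that
    by (intro sum.mono_neutral_left) (auto simp: whitney2_eq_0)
  then have "(\<Sum>k=0..l. whitney1 m r l k * dowling m r k x)
      = (\<Sum>k=0..l. \<Sum>j=0..l. whitney1 m r l k * whitney2 m r k j * x ^ j)"
    by (simp add: sum_distrib_left mult.assoc)
  also have "\<dots> = (\<Sum>j=0..l. (\<Sum>k=0..l. whitney1 m r l k * whitney2 m r k j) * x ^ j)"
    by (subst sum.swap) (simp add: sum_distrib_right)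
  also have "\<dots> = (\<Sum>j=0..l. if l = j then x ^ j else 0)"
    by (intro sum.cong) (simp_all add: whitney1_whitney2_inverse[OF assms])
  finally show ?thesis by simp
qed

theorem mainTheorem14:
  fixes m r n :: nat and x :: real
  assumes "m \<ge> 1"
  shows "bernoulli_poly n x =
    (\<Sum>k=0..n. \<Sum>l=k..n. real (n choose l) * bernoulli_num (n - l)
        * whitney1 m r l k * dowling m r k x)"
proof -
  have "(\<Sum>k=0..l. real (n choose l) * bernoulli_num (n - l) * whitney1 m r l k * dowling m r k x)
      = real (n choose l) * bernoulli_num (n - l) * x ^ l" for l
    using sum_whitney1_dowling[of m r l x] assms
    by (simp add: mult.assoc flip: sum_distrib_left)
  then show ?thesis
    by (simp add: sum_triangle_swap bernoulli_poly_binomial_expansion)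
qed

end
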